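(* Let $D$ be a Dyck path of length $2n$. There is a bijection $\kappa$ from the set of columns of $S(D)$ that are below a step $\nearrow$ to the set of odd columns of $S(D)$ such that, for every such column $c$, $c$ and $\kappa(c)$ contain the same number of cells.
   Context: A Dyck path of length $2m$ is a lattice path from $(0,0)$ to $(2m,0)$ with steps $\nearrow=(1,1)$, $\searrow=(1,-1)$ never going below the $x$-axis; $P(x)$ denotes its height at abscissa $x$. A cell is a point $(a,b)\in\mathbb{Z}^2$ with $b\ge0$, $a+b$ even (the tilted square with vertices $(a,b),(a+1,b\pm1),(a+2,b)$). The Dyck shape of $P$ (length $2m$) is $S(P)=\{(a,b): b\ge0,\ a+b\text{ even},\ 0\le a\le 2m-2,\ b+1\le P(a+1)\}$. For $0\le a\le 2m-2$, the column $a$ of $S(P)$ (which is the $(a+1)$-st column counting from $1$) is the set of cells of $S(P)$ with first coordinate $a$. It is below a step $\nearrow$ if the $(a+1)$-st step of $P$ is $\nearrow$. It is an odd column if $a+1$ is odd, i.e. $a$ is even. *)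

theory Defs
  imports Main
begin

text \<open>A path is a list of steps: True = up step (1,1), False = down step (1,-1).
  The i-th step (counting from 1) is the list element at index i-1.\<close>

definition height :: "bool list \<Rightarrow> nat \<Rightarrow> int" where
  "height D x = (\<Sum>s\<leftarrow>take x D. if s then 1 else -1)"

definition dyck_path :: "nat \<Rightarrow> bool list \<Rightarrow> bool" where
  "dyck_path n D \<longleftrightarrow> length D = 2 * n \<and> (\<forall>x\<le>length D. height D x \<ge> 0)
     \<and> height D (length D) = 0"

text \<open>Dyck shape of a path of length 2m (here m = length D / 2, so 2m - 2 = length D - 2).\<close>
definition dyck_shape :: "bool list \<Rightarrow> (int \<times> int) set" where
  "dyck_shape D = {(a, b). b \<ge> 0 \<and> even (a + b) \<and> 0 \<le> a \<and> a \<le> int (length D) - 2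
      \<and> b + 1 \<le> height D (nat (a + 1))}"

definition column :: "bool list \<Rightarrow> int \<Rightarrow> (int \<times> int) set" where
  "column D a = {c \<in> dyck_shape D. fst c = a}"

definition columns_below_up :: "bool list \<Rightarrow> int set" where
  "columns_below_up D = {a. 0 \<le> a \<and> a \<le> int (length D) - 2 \<and> D ! nat a}"

definition odd_columns :: "bool list \<Rightarrow> int set" where
  "odd_columns D = {a. 0 \<le> a \<and> a \<le> int (length D) - 2 \<and> even a}"

end

theory Submission
  imports Defs "HOL-Library.Disjoint_Sets"
begin

text \<open>Column \<open>a\<close> of the Dyck shape has \<open>\<lceil>h/2\<rceil>\<close> cells, where \<open>h\<close> is the height of the path
  after step \<open>a + 1\<close>. So it suffices to show that for every \<open>v\<close> the number of up steps
  ending at height \<open>2v - 1\<close> or \<open>2v\<close> equals the number of steps in odd position ending at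
  height \<open>2v - 1\<close> (by parity these are all steps ending there). The difference is the number of
  up steps from \<open>2v - 1\<close> to \<open>2v\<close> minus the number of down steps from \<open>2v\<close> to \<open>2v - 1\<close>,
  which vanishes for a path returning to level 0. Gluing bijections between the fibres of
  the column size gives \<open>\<kappa>\<close>.\<close>

lemma bij_betw_if_card_fibres_eq:
  assumes "finite A" "finite B" "\<And>v. card {a\<in>A. f a = v} = card {b\<in>B. f b = v}"
  shows "\<exists>k. bij_betw k A B \<and> (\<forall>a\<in>A. f (k a) = f a)"
proof -
  have "\<forall>v. \<exists>g. bij_betw g {a\<in>A. f a = v} {b\<in>B. f b = v}"
    using assms by (intro allI finite_same_card_bij) auto
  then obtain g where g: "\<And>v. bij_betw (g v) {a\<in>A. f a = v} {b\<in>B. f b = v}"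
    by metis
  define k where "k a = g (f a) a" for a
  have fibre: "bij_betw k {a\<in>A. f a = v} {b\<in>B. f b = v}" for v
    using g[of v] by (rule bij_betw_cong[THEN iffD1, rotated]) (simp add: k_def)
  have "bij_betw k (\<Union>v. {a\<in>A. f a = v}) (\<Union>v. {b\<in>B. f b = v})"
    using fibre by (intro bij_betw_UNION_disjoint) (auto simp: disjoint_family_on_def)
  moreover have "(\<Union>v. {x\<in>X. f x = v}) = X" for X by auto
  ultimately have "bij_betw k A B" by simp
  moreover have "f (k a) = f a" if "a \<in> A" for a
    using that bij_betw_apply[OF fibre[of "f a"]] by auto
  ultimately show ?thesis by blast
qed

lemma height_Suc:
  "i < length D \<Longrightarrow> height D (Suc i) = height D i + (if D ! i then 1 else -1)"
  by (simp add: height_def take_Suc_conv_app_nth)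

lemma height_append: "x \<le> length D \<Longrightarrow> height (D @ E) x = height D x"
  by (simp add: height_def)

lemma odd_height_iff: "x \<le> length D \<Longrightarrow> odd (height D x) \<longleftrightarrow> odd x"
proof (induction x)
  case 0
  then show ?case by (simp add: height_def)
next
  case (Suc x)
  then show ?case by (simp add: height_Suc)
qed

definition steps_ending_at :: "bool list \<Rightarrow> bool \<Rightarrow> int \<Rightarrow> nat set" where
  "steps_ending_at D s h = {i. i < length D \<and> D ! i = s \<and> height D (Suc i) = h}"

lemma finite_steps_ending_at [simp]: "finite (steps_ending_at D s h)"
  by (simp add: steps_ending_at_def)

lemma card_steps_ending_at_snoc:
  "card (steps_ending_at (D @ [s]) t h) = card (steps_ending_at D t h)
     + (if s = t \<and> height D (length D) + (if s then 1 else -1) = h then 1 else 0)"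
proof -
  have "steps_ending_at (D @ [s]) t h = steps_ending_at D t h
      \<union> (if s = t \<and> height D (length D) + (if s then 1 else -1) = h then {length D} else {})"
    using height_Suc[of "length D" "D @ [s]"]
    by (auto simp: steps_ending_at_def nth_append height_append less_Suc_eq)
  then show ?thesis by (simp add: steps_ending_at_def)
qed

text \<open>Between consecutive visits of the levels \<open>m\<close> and \<open>m + 1\<close> the crossings upwards and
  downwards alternate, so their numbers differ only by the net crossing of the whole path.\<close>
lemma card_up_steps_minus_card_down_steps:
  "int (card (steps_ending_at D True (m + 1))) - int (card (steps_ending_at D False m))
   = (if 0 \<le> m \<and> m < height D (length D) then 1
      else if height D (length D) \<le> m \<and> m < 0 then -1 else 0)"
proof (induction D rule: rev_induct)
  case Nil
  then show ?case by (simp add: steps_ending_at_def height_def)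
next
  case (snoc s D)
  have "height (D @ [s]) (length (D @ [s])) = height D (length D) + (if s then 1 else -1)"
    using height_Suc[of "length D" "D @ [s]"] by (simp add: height_append)
  then show ?case using snoc by (auto simp: card_steps_ending_at_snoc)
qed

lemma card_up_steps_eq_card_down_steps:
  assumes "height D (length D) = 0"
  shows "card (steps_ending_at D True (m + 1)) = card (steps_ending_at D False m)"
  using card_up_steps_minus_card_down_steps[of D m, unfolded assms] by (simp split: if_split_asm)

lemma card_parity_range:
  fixes a H :: int
  assumes "odd (a + H)" "0 \<le> H"
  shows "card {b. 0 \<le> b \<and> even (a + b) \<and> b + 1 \<le> H} = nat ((H + 1) div 2)"
proof -
  have "{b. 0 \<le> b \<and> even (a + b) \<and> b + 1 \<le> H} = (\<lambda>j. H - 1 - 2 * j) ` {0..<(H + 1) div 2}"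
  proof (intro set_eqI iffI)
    fix b assume "b \<in> {b. 0 \<le> b \<and> even (a + b) \<and> b + 1 \<le> H}"
    then have "b = H - 1 - 2 * ((H - 1 - b) div 2)" "(H - 1 - b) div 2 \<in> {0..<(H + 1) div 2}"
      using assms by auto
    then show "b \<in> (\<lambda>j. H - 1 - 2 * j) ` {0..<(H + 1) div 2}" by blast
  qed (use assms in \<open>auto; presburger\<close>)
  moreover have "inj (\<lambda>j::int. H - 1 - 2 * j)" by (auto intro: injI)
  ultimately show ?thesis by (simp add: card_image inj_on_subset)
qed

definition column_size :: "bool list \<Rightarrow> nat \<Rightarrow> nat" where
  "column_size D i = nat ((height D (Suc i) + 1) div 2)"

lemma card_column:
  assumes "Suc i < length D" "0 \<le> height D (Suc i)"
  shows "card (column D (int i)) = column_size D i"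
proof -
  have "nat (int i + 1) = Suc i" by simp
  then have "column D (int i) = Pair (int i) ` {b. 0 \<le> b \<and> even (int i + b) \<and> b + 1 \<le> height D (Suc i)}"
    using assms by (auto simp: column_def dyck_shape_def)
  moreover have "odd (int i + height D (Suc i))"
    using odd_height_iff[of "Suc i" D] assms by simp
  ultimately show ?thesis
    using card_parity_range[of "int i" "height D (Suc i)"] assms
    by (simp add: card_image inj_on_def column_size_def del: even_add)
qed

lemma dyck_path_last_step_down:
  assumes "dyck_path n D" "i < length D" "D ! i"
  shows "Suc i < length D"
proof (rule ccontr)
  assume "\<not> Suc i < length D"
  with assms have "length D = Suc i" by simp
  with assms have "height D (length D) = height D i + 1"
    using height_Suc[of i D] by simp
  moreover have "0 \<le> height D i"
    using assms by (simp add: dyck_path_def)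
  ultimately show False
    using assms by (simp add: dyck_path_def)
qed

lemma dyck_path_card_column:
  assumes "dyck_path n D" "i < length D" "D ! i \<or> even i"
  shows "card (column D (int i)) = column_size D i"
proof (rule card_column)
  show "Suc i < length D"
    using assms dyck_path_last_step_down[of n D i] by (auto simp: dyck_path_def)
  then show "0 \<le> height D (Suc i)"
    using assms by (simp add: dyck_path_def)
qed

lemma columns_below_up_eq:
  assumes "dyck_path n D"
  shows "columns_below_up D = int ` {i. i < length D \<and> D ! i}"
proof (intro set_eqI iffI)
  fix a assume "a \<in> columns_below_up D"
  then show "a \<in> int ` {i. i < length D \<and> D ! i}"
    by (auto simp: columns_below_up_def intro!: image_eqI[of _ _ "nat a"])
next
  fix a assume "a \<in> int ` {i. i < length D \<and> D ! i}"
  then obtain i where "a = int i" "i < length D" "D ! i" by blast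
  moreover have "Suc i < length D"
    using dyck_path_last_step_down[OF assms] calculation by blast
  ultimately show "a \<in> columns_below_up D" by (simp add: columns_below_up_def)
qed

lemma odd_columns_eq:
  assumes "even (length D)"
  shows "odd_columns D = int ` {i. i < length D \<and> even i}"
proof (intro set_eqI iffI)
  fix a assume "a \<in> odd_columns D"
  then show "a \<in> int ` {i. i < length D \<and> even i}"
    by (auto simp: odd_columns_def even_nat_iff intro!: image_eqI[of _ _ "nat a"])
next
  fix a assume "a \<in> int ` {i. i < length D \<and> even i}"
  then show "a \<in> odd_columns D"
    using assms by (auto simp: odd_columns_def) presburger
qed

lemma column_size_eq_iff:
  assumes "0 \<le> height D (Suc i)"
  shows "column_size D i = v \<longleftrightarrow> height D (Suc i) \<in> {2 * int v - 1, 2 * int v}"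
  using assms by (auto simp: column_size_def)

lemma dyck_path_card_up_steps_eq_card_even_steps:
  assumes "dyck_path n D"
  shows "card {i. i < length D \<and> D ! i \<and> column_size D i = v}
       = card {i. i < length D \<and> even i \<and> column_size D i = v}"
proof -
  define m where "m = 2 * int v - 1"
  have size: "column_size D i = v \<longleftrightarrow> height D (Suc i) \<in> {m, m + 1}" if "i < length D" for i
    using assms that column_size_eq_iff[of D i v] by (simp add: dyck_path_def m_def)
  have even_size: "even i \<and> column_size D i = v \<longleftrightarrow> height D (Suc i) = m"
    if "i < length D" for i
  proof -
    have "even i \<longleftrightarrow> odd (height D (Suc i))"
      using that odd_height_iff[of "Suc i" D] by simp
    moreover have "odd m" by (simp add: m_def)
    ultimately show ?thesis using size that by auto
  qed
  have "{i. i < length D \<and> D ! i \<and> column_size D i = v}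
      = steps_ending_at D True m \<union> steps_ending_at D True (m + 1)"
    using size by (auto simp: steps_ending_at_def)
  moreover have "{i. i < length D \<and> even i \<and> column_size D i = v}
      = steps_ending_at D True m \<union> steps_ending_at D False m"
    using even_size by (auto simp: steps_ending_at_def)
  moreover have "card (steps_ending_at D True (m + 1)) = card (steps_ending_at D False m)"
    using assms by (intro card_up_steps_eq_card_down_steps) (auto simp: dyck_path_def)
  ultimately show ?thesis
    by (simp add: card_Un_disjoint disjoint_iff steps_ending_at_def)
qed

theorem mainTheorem9:
  fixes n :: nat and D :: "bool list"
  assumes "dyck_path n D"
  shows "\<exists>\<kappa>. bij_betw \<kappa> (columns_below_up D) (odd_columns D)
           \<and> (\<forall>c\<in>columns_below_up D. card (column D c) = card (column D (\<kappa> c)))"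
proof -
  have even_length: "even (length D)"
    using assms by (simp add: dyck_path_def)
  have fibres: "card {a \<in> columns_below_up D. card (column D a) = v}
      = card {b \<in> odd_columns D. card (column D b) = v}" for v
  proof -
    have "{a \<in> columns_below_up D. card (column D a) = v}
        = int ` {i. i < length D \<and> D ! i \<and> column_size D i = v}"
      using assms by (auto simp: columns_below_up_eq dyck_path_card_column)
    moreover have "{b \<in> odd_columns D. card (column D b) = v}
        = int ` {i. i < length D \<and> even i \<and> column_size D i = v}"
      using assms even_length by (auto simp: odd_columns_eq dyck_path_card_column)
    ultimately show ?thesis
      using dyck_path_card_up_steps_eq_card_even_steps[OF assms] by (simp add: card_image)
  qed
  have "finite (columns_below_up D)" "finite (odd_columns D)"
    using assms even_length by (simp_all add: columns_below_up_eq odd_columns_eq)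
  from bij_betw_if_card_fibres_eq[OF this fibres] show ?thesis
    by auto
qed

end
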